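(* Let $H$ be a bigraph and $a,c$ distinct vertices of $H$. The vertex $(a,c)$ of $H^+$ is implied by some non-trivial strong component $S$ of $H^+$ (i.e. $(a,c)\notin S$ and some vertex of $S$ has an arc to $(a,c)$) if and only if $H$ contains an induced path $a,b,c,d,e$ with $N(a)\subseteq N(c)$. Moreover, if such a path exists, then the non-trivial strong component implying $(a,c)$ contains the pairs $(a,d),(a,e),(b,d),(b,e)$.
   Context: A bigraph is a bipartite graph $H$ with fixed bipartition $(B,W)$ (black/white colours); $N(x)$ is the neighbourhood of $x$ in $H$. The pair-digraph $H^+$ has vertices all ordered pairs $(u,v)$ of distinct vertices of $H$, and arcs $(u,v)\to(u',v)$ whenever $u,v$ have the same colour, $uu'\in E(H)$, $vu'\notin E(H)$, and $(u,v)\to(u,v')$ whenever $u,v$ have different colours, $vv'\in E(H)$, $uv\notin E(H)$. A strong component is non-trivial if it has more than one vertex. *)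

theory Defs
  imports Main
begin

definition bigraph :: "'a set \<Rightarrow> ('a \<Rightarrow> 'a \<Rightarrow> bool) \<Rightarrow> 'a set \<Rightarrow> 'a set \<Rightarrow> bool" where
  "bigraph V E B W \<longleftrightarrow> finite V \<and> V = B \<union> W \<and> B \<inter> W = {} \<and>
     (\<forall>x y. E x y \<longrightarrow> x \<in> V \<and> y \<in> V) \<and>
     (\<forall>x y. E x y \<longrightarrow> E y x) \<and>
     (\<forall>x y. E x y \<longrightarrow> (x \<in> B \<and> y \<in> W) \<or> (x \<in> W \<and> y \<in> B))"

definition nbhd :: "('a \<Rightarrow> 'a \<Rightarrow> bool) \<Rightarrow> 'a \<Rightarrow> 'a set" where
  "nbhd E x = {y. E x y}"

definition same_colour :: "'a set \<Rightarrow> 'a set \<Rightarrow> 'a \<Rightarrow> 'a \<Rightarrow> bool" where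
  "same_colour B W u v \<longleftrightarrow> (u \<in> B \<and> v \<in> B) \<or> (u \<in> W \<and> v \<in> W)"

definition pair_verts :: "'a set \<Rightarrow> ('a \<times> 'a) set" where
  "pair_verts V = {(u, v). u \<in> V \<and> v \<in> V \<and> u \<noteq> v}"

definition pair_arc :: "'a set \<Rightarrow> ('a \<Rightarrow> 'a \<Rightarrow> bool) \<Rightarrow> 'a set \<Rightarrow> 'a set \<Rightarrow>
    'a \<times> 'a \<Rightarrow> 'a \<times> 'a \<Rightarrow> bool" where
  "pair_arc V E B W p q \<longleftrightarrow> p \<in> pair_verts V \<and> q \<in> pair_verts V \<and>
     (let (u, v) = p; (u', v') = q in
       (same_colour B W u v \<and> v' = v \<and> E u u' \<and> \<not> E v u') \<or>
       (\<not> same_colour B W u v \<and> u' = u \<and> E v v' \<and> \<not> E u v))"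

definition pair_reach :: "'a set \<Rightarrow> ('a \<Rightarrow> 'a \<Rightarrow> bool) \<Rightarrow> 'a set \<Rightarrow> 'a set \<Rightarrow>
    'a \<times> 'a \<Rightarrow> 'a \<times> 'a \<Rightarrow> bool" where
  "pair_reach V E B W = (pair_arc V E B W)\<^sup>*\<^sup>*"

definition strong_component :: "'a set \<Rightarrow> ('a \<Rightarrow> 'a \<Rightarrow> bool) \<Rightarrow> 'a set \<Rightarrow> 'a set \<Rightarrow>
    ('a \<times> 'a) set \<Rightarrow> bool" where
  "strong_component V E B W S \<longleftrightarrow> (\<exists>x \<in> pair_verts V.
     S = {y \<in> pair_verts V. pair_reach V E B W x y \<and> pair_reach V E B W y x})"

definition nontrivial_strong_component where
  "nontrivial_strong_component V E B W S \<longleftrightarrow> strong_component V E B W S \<and> card S > 1"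

definition implies_pair where
  "implies_pair V E B W S p \<longleftrightarrow> p \<notin> S \<and> (\<exists>q \<in> S. pair_arc V E B W q p)"

definition induced_path :: "'a set \<Rightarrow> ('a \<Rightarrow> 'a \<Rightarrow> bool) \<Rightarrow> 'a list \<Rightarrow> bool" where
  "induced_path V E xs \<longleftrightarrow> distinct xs \<and> set xs \<subseteq> V \<and>
     (\<forall>i < length xs. \<forall>j < length xs. E (xs ! i) (xs ! j) \<longleftrightarrow> (i = j + 1 \<or> j = i + 1))"

end

theory Submission
  imports Defs
begin

(* In a bigraph every edge joins the two colour classes, so the
   arcs of H+ entering a pair (x,v) have a shape fixed by whether x and v have
   the same colour (arc_into_same_colour, arc_into_diff_colour).
   Forward: for an induced path a,b,c,d,e the pairs (a,d),(a,e),(b,e),(b,d)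
   form a directed 4-cycle, hence lie in one non-trivial strong component, and
   (a,d) -> (a,c); if N(a) is contained in N(c), then (a,c) is a sink of H+ and
   so lies outside that component.
   Backward: an implied pair cannot reach back into its implying component S.
   Walking backwards inside S from an in-neighbour of (a,c), every step is
   forced by the colour lemmas, since the alternatives would lead from (a,c)
   back into S; this yields that a, c have the same colour, that N(a) is
   contained in N(c), and the remaining vertices of the induced path. *)

section \<open>Bigraphs and the arcs of the pair-digraph\<close>

lemma bigraph_edge:
  assumes "bigraph V E B W" "E x y"
  shows "x \<in> V \<and> y \<in> V \<and> E y x \<and> (x \<in> B \<longleftrightarrow> y \<notin> B)"
  using assms unfolding bigraph_def by blast

lemma bigraph_same_colour:
  assumes "bigraph V E B W" "x \<in> V" "y \<in> V"
  shows "same_colour B W x y \<longleftrightarrow> (x \<in> B \<longleftrightarrow> y \<in> B)"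
  using assms unfolding bigraph_def same_colour_def by blast

lemma pair_verts_iff: "(x, y) \<in> pair_verts V \<longleftrightarrow> x \<in> V \<and> y \<in> V \<and> x \<noteq> y"
  unfolding pair_verts_def by auto

lemma finite_pair_verts: "finite V \<Longrightarrow> finite (pair_verts V)"
  by (rule finite_subset[of _ "V \<times> V"]) (auto simp: pair_verts_def)

lemma pair_arc_iff:
  assumes "bigraph V E B W"
  shows "pair_arc V E B W (u, v) (u', v') \<longleftrightarrow>
     (u, v) \<in> pair_verts V \<and> (u', v') \<in> pair_verts V \<and>
     (((u \<in> B \<longleftrightarrow> v \<in> B) \<and> v' = v \<and> E u u' \<and> \<not> E v u') \<or>
      (\<not> (u \<in> B \<longleftrightarrow> v \<in> B) \<and> u' = u \<and> E v v' \<and> \<not> E u v))"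
  using bigraph_same_colour[OF assms, of u v]
  unfolding pair_arc_def pair_verts_iff by auto

lemma arc_move_first:
  assumes bg: "bigraph V E B W" and "(u, v) \<in> pair_verts V" "u \<in> B \<longleftrightarrow> v \<in> B"
    and "E u u'" "\<not> E v u'"
  shows "pair_arc V E B W (u, v) (u', v)"
  using assms bigraph_edge[OF bg, of u u'] by (auto simp: pair_arc_iff[OF bg] pair_verts_iff)

lemma arc_move_second:
  assumes bg: "bigraph V E B W" and "(u, v) \<in> pair_verts V" "\<not> (u \<in> B \<longleftrightarrow> v \<in> B)"
    and "E v v'" "\<not> E u v"
  shows "pair_arc V E B W (u, v) (u, v')"
  using assms bigraph_edge[OF bg, of v v'] by (auto simp: pair_arc_iff[OF bg] pair_verts_iff)

lemma arc_into_same_colour: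
  assumes bg: "bigraph V E B W" and arc: "pair_arc V E B W z (x, v)"
    and col: "x \<in> B \<longleftrightarrow> v \<in> B"
  shows "\<exists>w. z = (x, w) \<and> E w v \<and> \<not> E x w"
proof -
  obtain u w where z: "z = (u, w)" by (cases z)
  show ?thesis
    using arc col bigraph_edge[OF bg, of u x] bigraph_edge[OF bg, of w v]
    unfolding z by (auto simp: pair_arc_iff[OF bg])
qed

lemma arc_into_diff_colour:
  assumes bg: "bigraph V E B W" and arc: "pair_arc V E B W z (x, v)"
    and col: "\<not> (x \<in> B \<longleftrightarrow> v \<in> B)"
  shows "\<exists>u. z = (u, v) \<and> E u x \<and> \<not> E v x"
proof -
  obtain u w where z: "z = (u, w)" by (cases z)
  show ?thesis
    using arc col bigraph_edge[OF bg, of u x] bigraph_edge[OF bg, of w v]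
    unfolding z by (auto simp: pair_arc_iff[OF bg])
qed

text \<open>If N(a) is contained in N(c) and a, c have the same colour, then (a,c) is a
  sink of H+: every candidate u' adjacent to a is also adjacent to c.\<close>
lemma sink_pair:
  assumes bg: "bigraph V E B W" and nb: "nbhd E a \<subseteq> nbhd E c"
    and col: "a \<in> B \<longleftrightarrow> c \<in> B"
  shows "\<not> pair_arc V E B W (a, c) p"
proof
  assume "pair_arc V E B W (a, c) p"
  then obtain u' where "E a u'" "\<not> E c u'"
    using col by (cases p) (auto simp: pair_arc_iff[OF bg])
  with nb show False unfolding nbhd_def by auto
qed

section \<open>Reachability and strong components\<close>

lemma reach_arc: "pair_arc V E B W p q \<Longrightarrow> pair_reach V E B W p q"
  unfolding pair_reach_def by auto

lemma reach_trans:
  "pair_reach V E B W p q \<Longrightarrow> pair_reach V E B W q r \<Longrightarrow> pair_reach V E B W p r"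
  unfolding pair_reach_def by auto

lemma sink_reach:
  assumes "\<And>p. \<not> pair_arc V E B W x p" "pair_reach V E B W x y"
  shows "y = x"
  using assms(2) unfolding pair_reach_def by (metis assms(1) converse_rtranclpE)

definition scc_of :: "'a set \<Rightarrow> ('a \<Rightarrow> 'a \<Rightarrow> bool) \<Rightarrow> 'a set \<Rightarrow> 'a set \<Rightarrow>
    'a \<times> 'a \<Rightarrow> ('a \<times> 'a) set" where
  "scc_of V E B W x = {y \<in> pair_verts V. pair_reach V E B W x y \<and> pair_reach V E B W y x}"

lemma scc_of_strong_component:
  "x \<in> pair_verts V \<Longrightarrow> strong_component V E B W (scc_of V E B W x)"
  unfolding strong_component_def scc_of_def by blast

lemma component_reach:
  "strong_component V E B W S \<Longrightarrow> p \<in> S \<Longrightarrow> q \<in> S \<Longrightarrow> pair_reach V E B W p q"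
  unfolding strong_component_def by (auto intro: reach_trans)

lemma component_convex:
  assumes S: "strong_component V E B W S" and "q \<in> S" "q' \<in> S"
    and qp: "pair_reach V E B W q p" and pq': "pair_reach V E B W p q'"
  shows "p \<in> S"
proof -
  obtain x where x: "x \<in> pair_verts V"
    and S_eq: "S = {y \<in> pair_verts V. pair_reach V E B W x y \<and> pair_reach V E B W y x}"
    using S unfolding strong_component_def by blast
  have "p \<in> pair_verts V"
  proof (cases "p = q'")
    case True with \<open>q' \<in> S\<close> S_eq show ?thesis by simp
  next
    case False
    then obtain r where "pair_arc V E B W p r"
      using pq' unfolding pair_reach_def by (metis converse_rtranclpE)
    then show ?thesis unfolding pair_arc_def by simp
  qed
  with assms S_eq show ?thesis by (blast intro: reach_trans)
qed

lemma implied_not_reach: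
  assumes S: "strong_component V E B W S" and imp: "implies_pair V E B W S p"
    and "q \<in> S"
  shows "\<not> pair_reach V E B W p q"
proof
  assume pq: "pair_reach V E B W p q"
  obtain q0 where "q0 \<in> S" "pair_arc V E B W q0 p" "p \<notin> S"
    using imp unfolding implies_pair_def by blast
  with component_convex[OF S _ \<open>q \<in> S\<close> reach_arc pq] show False by blast
qed

lemma nontrivial_component_in_arc:
  assumes ns: "nontrivial_strong_component V E B W S" and p: "p \<in> S"
  shows "\<exists>z \<in> S. pair_arc V E B W z p"
proof -
  have S: "strong_component V E B W S" and card: "card S > 1"
    using ns unfolding nontrivial_strong_component_def by auto
  then have "finite S" by (intro card_ge_0_finite) simp
  with card have "\<not> (\<forall>x\<in>S. \<forall>y\<in>S. x = y)"
    using card_le_Suc0_iff_eq[of S] by linarith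
  with p obtain y where y: "y \<in> S" "y \<noteq> p" by blast
  then obtain z where yz: "pair_reach V E B W y z" and zp: "pair_arc V E B W z p"
    using component_reach[OF S y(1) p] unfolding pair_reach_def by (metis rtranclp.cases)
  have "z \<in> S" using component_convex[OF S y(1) p yz reach_arc[OF zp]] .
  with zp show ?thesis by blast
qed

section \<open>Induced paths on five vertices\<close>

lemma induced_path5_iff:
  "induced_path V E [x0, x1, x2, x3, x4] \<longleftrightarrow>
   distinct [x0, x1, x2, x3, x4] \<and> set [x0, x1, x2, x3, x4] \<subseteq> V \<and>
   E x0 x1 \<and> E x1 x0 \<and> E x1 x2 \<and> E x2 x1 \<and> E x2 x3 \<and> E x3 x2 \<and> E x3 x4 \<and> E x4 x3 \<and>
   \<not> E x0 x0 \<and> \<not> E x1 x1 \<and> \<not> E x2 x2 \<and> \<not> E x3 x3 \<and> \<not> E x4 x4 \<and>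
   \<not> E x0 x2 \<and> \<not> E x2 x0 \<and> \<not> E x0 x3 \<and> \<not> E x3 x0 \<and> \<not> E x0 x4 \<and> \<not> E x4 x0 \<and>
   \<not> E x1 x3 \<and> \<not> E x3 x1 \<and> \<not> E x1 x4 \<and> \<not> E x4 x1 \<and> \<not> E x2 x4 \<and> \<not> E x4 x2"
  unfolding induced_path_def
  by (simp add: less_Suc_eq all_conj_distrib numeral_eq_Suc) blast

text \<open>In a bigraph a walk a,b,c,d,e is an induced path as soon as the two chords
  of odd length, ad and be, are missing: chords of even length join vertices of
  equal colour, and the missing chords also force the vertices to be distinct.\<close>
lemma induced_path5_intro:
  assumes bg: "bigraph V E B W"
    and edges: "E a b" "E b c" "E c d" "E d e"
    and chords: "\<not> E a d" "\<not> E b e"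
  shows "induced_path V E [a, b, c, d, e]"
proof -
  note edge = bigraph_edge[OF bg]
  have no_edge: "\<not> E x y" if "x \<in> B \<longleftrightarrow> y \<in> B" for x y
    using edge[of x y] that by blast
  have "a \<noteq> c" "a \<noteq> e" "b \<noteq> d" "c \<noteq> e" "\<not> E d a" "\<not> E e b"
    using edges chords edge by blast+
  then show ?thesis
    unfolding induced_path5_iff
    using edges chords edge[OF edges(1)] edge[OF edges(2)] edge[OF edges(3)] edge[OF edges(4)]
    by (auto simp: no_edge)
qed

lemma path_gives_implying_component:
  assumes bg: "bigraph V E B W" and ip: "induced_path V E [a, b, c, d, e]"
    and nb: "nbhd E a \<subseteq> nbhd E c"
  shows "\<exists>S. nontrivial_strong_component V E B W S \<and> implies_pair V E B W S (a, c) \<and>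
             (a, d) \<in> S \<and> (a, e) \<in> S \<and> (b, d) \<in> S \<and> (b, e) \<in> S"
proof -
  note P = ip[unfolded induced_path5_iff]
  have col: "a \<in> B \<longleftrightarrow> b \<notin> B" "b \<in> B \<longleftrightarrow> c \<notin> B" "c \<in> B \<longleftrightarrow> d \<notin> B" "d \<in> B \<longleftrightarrow> e \<notin> B"
    using bigraph_edge[OF bg] P by blast+
  have pv: "(a, d) \<in> pair_verts V" "(a, e) \<in> pair_verts V" "(b, e) \<in> pair_verts V"
    "(b, d) \<in> pair_verts V"
    using P by (auto simp: pair_verts_iff)
  have ad_ae: "pair_arc V E B W (a, d) (a, e)" by (rule arc_move_second[OF bg pv(1)]) (use P col in auto)
  have ae_be: "pair_arc V E B W (a, e) (b, e)" by (rule arc_move_first[OF bg pv(2)]) (use P col in auto)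
  have be_bd: "pair_arc V E B W (b, e) (b, d)" by (rule arc_move_second[OF bg pv(3)]) (use P col in auto)
  have bd_ad: "pair_arc V E B W (b, d) (a, d)" by (rule arc_move_first[OF bg pv(4)]) (use P col in auto)
  have ad_ac: "pair_arc V E B W (a, d) (a, c)" by (rule arc_move_second[OF bg pv(1)]) (use P col in auto)
  define S where "S = scc_of V E B W (a, d)"
  have S: "strong_component V E B W S"
    unfolding S_def by (rule scc_of_strong_component[OF pv(1)])
  note cycle = reach_arc[OF ad_ae] reach_arc[OF ae_be] reach_arc[OF be_bd] reach_arc[OF bd_ad]
  have members: "(a, d) \<in> S" "(a, e) \<in> S" "(b, e) \<in> S" "(b, d) \<in> S"
    unfolding S_def scc_of_def using pv cycle
    by (auto simp: pair_reach_def[symmetric] intro: reach_trans)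
  have "finite S"
    using finite_pair_verts[of V] bg S unfolding bigraph_def strong_component_def
    by (auto intro: finite_subset)
  moreover have "(a, d) \<noteq> (a, e)" using P by simp
  ultimately have "\<not> card S \<le> Suc 0"
    using members card_le_Suc0_iff_eq[of S] by blast
  then have nontrivial: "card S > 1" by simp
  have "(a, c) \<notin> S"
  proof
    assume "(a, c) \<in> S"
    then have "pair_reach V E B W (a, c) (a, d)"
      using component_reach[OF S _ members(1)] by blast
    then have "(a, d) = (a, c)"
      using sink_reach sink_pair[OF bg nb] col by blast
    with P show False by simp
  qed
  with S nontrivial members ad_ac show ?thesis
    unfolding nontrivial_strong_component_def implies_pair_def by blast
qed

text \<open>Were the colours
  different, the in-arcs would be forced to come from (u,c) and, before that, from
  (u,w); but (a,c) -> (a,w) -> (u,w) would then lead back into S.\<close>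
lemma implied_pair_entry:
  assumes bg: "bigraph V E B W" and ns: "nontrivial_strong_component V E B W S"
    and imp: "implies_pair V E B W S (a, c)"
  shows "(a \<in> B \<longleftrightarrow> c \<in> B) \<and> (\<exists>v. (a, v) \<in> S \<and> E v c \<and> \<not> E a v)"
proof -
  have S: "strong_component V E B W S"
    using ns unfolding nontrivial_strong_component_def by simp
  obtain q where q: "q \<in> S" "pair_arc V E B W q (a, c)"
    using imp unfolding implies_pair_def by blast
  note edge = bigraph_edge[OF bg]
  have col: "a \<in> B \<longleftrightarrow> c \<in> B"
  proof (rule ccontr)
    assume diff: "\<not> (a \<in> B \<longleftrightarrow> c \<in> B)"
    then obtain u where u: "q = (u, c)" "E u a" "\<not> E c a"
      using arc_into_diff_colour[OF bg q(2)] by blast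
    have "u \<in> B \<longleftrightarrow> c \<in> B" using diff edge[OF u(2)] by blast
    then obtain w where w: "(u, w) \<in> S" "E w c" "\<not> E u w"
      using nontrivial_component_in_arc[OF ns q(1)] arc_into_same_colour[OF bg] u(1) by metis
    have ac: "(a, c) \<in> pair_verts V" using q(2) unfolding pair_arc_def by simp
    have aw: "(a, w) \<in> pair_verts V"
      using edge[OF w(2)] edge[OF u(2)] u(2) w(3) by (auto simp: pair_verts_iff)
    have "pair_arc V E B W (a, c) (a, w)"
      by (rule arc_move_second[OF bg ac diff]) (use edge[OF w(2)] u(3) edge[of a c] in auto)
    moreover have "pair_arc V E B W (a, w) (u, w)"
      by (rule arc_move_first[OF bg aw]) (use diff edge[OF w(2)] edge[OF u(2)] w(3) edge[of w u] in auto)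
    ultimately have "pair_reach V E B W (a, c) (u, w)" by (blast intro: reach_arc reach_trans)
    with implied_not_reach[OF S imp w(1)] show False by blast
  qed
  moreover obtain v where "q = (a, v)" "E v c" "\<not> E a v"
    using arc_into_same_colour[OF bg q(2) col] by blast
  ultimately show ?thesis using q(1) by blast
qed

text \<open>With (a,v) in S as above, N(a) is contained in N(c): a neighbour y of a
  outside N(c) would give the walk (a,c) -> (y,c) -> (y,v) -> (a,v) back into S.\<close>
lemma implied_pair_nbhd:
  assumes bg: "bigraph V E B W" and S: "strong_component V E B W S"
    and imp: "implies_pair V E B W S (a, c)" and av: "(a, v) \<in> S"
    and vc: "E v c" and nav: "\<not> E a v" and col: "a \<in> B \<longleftrightarrow> c \<in> B"
    and ac: "(a, c) \<in> pair_verts V"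
  shows "nbhd E a \<subseteq> nbhd E c"
proof
  fix y assume "y \<in> nbhd E a"
  then have ay: "E a y" unfolding nbhd_def by simp
  show "y \<in> nbhd E c"
  proof (rule ccontr)
    assume "y \<notin> nbhd E c"
    then have ncy: "\<not> E c y" unfolding nbhd_def by simp
    note edge = bigraph_edge[OF bg]
    have yc: "(y, c) \<in> pair_verts V" and yv: "(y, v) \<in> pair_verts V"
      using edge[OF ay] edge[OF vc] edge[of v a] col ac nav by (auto simp: pair_verts_iff)
    have col_yc: "\<not> (y \<in> B \<longleftrightarrow> c \<in> B)" and col_yv: "y \<in> B \<longleftrightarrow> v \<in> B"
      using edge[OF ay] edge[OF vc] col by blast+
    have "pair_arc V E B W (a, c) (y, c)" by (rule arc_move_first[OF bg ac col ay ncy])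
    moreover have "pair_arc V E B W (y, c) (y, v)"
      by (rule arc_move_second[OF bg yc col_yc]) (use edge[OF vc] ncy edge[of y c] in auto)
    moreover have "pair_arc V E B W (y, v) (a, v)"
      by (rule arc_move_first[OF bg yv col_yv]) (use edge[OF ay] nav edge[of v a] in auto)
    ultimately have "pair_reach V E B W (a, c) (a, v)" by (blast intro: reach_arc reach_trans)
    with implied_not_reach[OF S imp av] show False by blast
  qed
qed

text \<open>An implying non-trivial strong component yields an induced path a,x,c,v,y with
  N(a) contained in N(c): walking backwards in S from (a,v) gives (x,v) with
  x adjacent to a (hence to c), and then (x,y) with y adjacent to v but not x.\<close>
lemma implying_component_gives_path:
  assumes bg: "bigraph V E B W" and ns: "nontrivial_strong_component V E B W S"
    and imp: "implies_pair V E B W S (a, c)" and ac: "(a, c) \<in> pair_verts V"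
  shows "\<exists>b d e. induced_path V E [a, b, c, d, e] \<and> nbhd E a \<subseteq> nbhd E c"
proof -
  have S: "strong_component V E B W S"
    using ns unfolding nontrivial_strong_component_def by simp
  note edge = bigraph_edge[OF bg]
  obtain v where col: "a \<in> B \<longleftrightarrow> c \<in> B" and av: "(a, v) \<in> S" "E v c" "\<not> E a v"
    using implied_pair_entry[OF bg ns imp] by blast
  have nb: "nbhd E a \<subseteq> nbhd E c"
    using implied_pair_nbhd[OF bg S imp av col ac] .
  have col_av: "\<not> (a \<in> B \<longleftrightarrow> v \<in> B)" using col edge[OF av(2)] by blast
  obtain x where x: "(x, v) \<in> S" "E x a"
    using nontrivial_component_in_arc[OF ns av(1)] arc_into_diff_colour[OF bg _ col_av] by blast
  have "E c x" using edge[OF x(2)] nb unfolding nbhd_def by blast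
  then have xc: "E x c" using edge by blast
  have col_xv: "x \<in> B \<longleftrightarrow> v \<in> B" using col_av edge[OF x(2)] by blast
  obtain y where "E y v" "\<not> E x y"
    using nontrivial_component_in_arc[OF ns x(1)] arc_into_same_colour[OF bg _ col_xv] by blast
  then have "induced_path V E [a, x, c, v, y]"
    using induced_path5_intro[OF bg _ xc _ _ av(3)] edge[OF x(2)] edge[OF av(2)] edge by metis
  with nb show ?thesis by blast
qed

theorem lemma2p6:
  assumes "bigraph V E B W"
    and "a \<in> V" and "c \<in> V" and "a \<noteq> c"
  shows "((\<exists>S. nontrivial_strong_component V E B W S \<and> implies_pair V E B W S (a, c)) \<longleftrightarrow>
          (\<exists>b d e. induced_path V E [a, b, c, d, e] \<and> nbhd E a \<subseteq> nbhd E c))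
       \<and> (\<forall>b d e. induced_path V E [a, b, c, d, e] \<and> nbhd E a \<subseteq> nbhd E c \<longrightarrow>
            (\<exists>S. nontrivial_strong_component V E B W S \<and> implies_pair V E B W S (a, c) \<and>
                 (a, d) \<in> S \<and> (a, e) \<in> S \<and> (b, d) \<in> S \<and> (b, e) \<in> S))"
proof -
  have ac: "(a, c) \<in> pair_verts V" using assms by (simp add: pair_verts_iff)
  show ?thesis
    using path_gives_implying_component[OF assms(1)]
      implying_component_gives_path[OF assms(1) _ _ ac] by blast
qed

end
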